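(* For every Borel subset $A$ of $\mathbb N^{\mathbb N}$ there exist $g\in\mathbb N^{\mathbb N}$ and $f\in\mathbf{Stp}$ with $A=[\![g]\!]^{\mathcal B}_f$; that is, the map $\mathbb N^{\mathbb N}\times\mathbf{Stp}\to\mathcal B$, $(g,f)\mapsto[\![g]\!]^{\mathcal B}_f$, is surjective onto the family $\mathcal B$ of Borel subsets of $\mathbb N^{\mathbb N}$.
   Context: $\mathbb N=\{1,2,\dots\}$, $\mathbb N^{\mathbb N}$ with the product of discrete topologies, $\mathcal B$ its Borel sets. $B^m_n=\{f: f(n)=m\}$. Fix any bijection $\langle\cdot,\cdot\rangle:\mathbb N\times\mathbb N\to\mathbb N\setminus\{1\}$, and for a finite tuple put $\langle\,\rangle=1$ and $\langle a_1a_2\cdots a_n\rangle=\langle a_1,\langle a_2\cdots a_n\rangle\rangle$, a bijection from finite tuples onto $\mathbb N$. For $k\in\mathbb N$: $[\![k]\!]^{\mathcal S'}=\mathbb N^{\mathbb N}\setminus B^m_n$ if $k=\langle 1mn\rangle$, $=B^m_n$ if $k=\langle 2mn\rangle$, $=\emptyset$ otherwise; if $k=\langle a_1\cdots a_K\rangle$ then $[\![k]\!]^{\mathcal S'_\cap}=\bigcap_{i\le K}[\![a_i]\!]^{\mathcal S'}$ (empty intersection $=\mathbb N^{\mathbb N}$) and $[\![k]\!]^{\mathcal A}=\bigcup_{i\le K}[\![a_i]\!]^{\mathcal S'_\cap}$ (empty union $=\emptyset$). For $f\in\mathbb N^{\mathbb N}$, $n\in\mathbb N$ let $f^{[n]}(m)=f(\langle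 n,m\rangle)$. The set $\mathbf{Stp}\subseteq\mathbb N^{\mathbb N}$ of stumps is defined inductively: if $f(1)\ne1$ then $f\in\mathbf{Stp}$; if $f(1)=1$ and $f^{[n]}\in\mathbf{Stp}$ for all $n$ then $f\in\mathbf{Stp}$. For $f\in\mathbf{Stp}$ and $g\in\mathbb N^{\mathbb N}$ define recursively: if $f(1)\neq1$, $[\![g]\!]^\Pi_f=\bigcap_{n\ge2}[\![g(n)]\!]^{\mathcal A}$ and $[\![g]\!]^\Sigma_f=\bigcup_{n\ge2}[\![g(n)]\!]^{\mathcal A}$; if $f(1)=1$, $[\![g]\!]^\Pi_f=\bigcap_{n}[\![g^{[n]}]\!]^\Sigma_{f^{[n]}}$ and $[\![g]\!]^\Sigma_f=\bigcup_{n}[\![g^{[n]}]\!]^\Pi_{f^{[n]}}$. Finally $[\![g]\!]^{\mathcal B}_f=[\![g]\!]^\Pi_f$ if $g(1)=37$ and $[\![g]\!]^{\mathcal B}_f=[\![g]\!]^\Sigma_f$ if $g(1)\neq37$. *)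

theory Defs
  imports "HOL-Analysis.Analysis"
begin

definition Npos :: "nat set" where "Npos = {1..}"

text \<open>Baire space N^N: extensional functions N -> N (value undefined off N).\<close>
definition Baire :: "(nat \<Rightarrow> nat) set" where "Baire = PiE Npos (\<lambda>_. Npos)"

definition Baire_top :: "(nat \<Rightarrow> nat) topology" where
  "Baire_top = product_topology (\<lambda>_. discrete_topology Npos) Npos"

definition Borel_Baire :: "(nat \<Rightarrow> nat) set set" where
  "Borel_Baire = sigma_sets (topspace Baire_top) {U. openin Baire_top U}"

definition Bmn :: "nat \<Rightarrow> nat \<Rightarrow> (nat \<Rightarrow> nat) set" where
  "Bmn m n = {f \<in> Baire. f n = m}"

fun tup :: "(nat \<times> nat \<Rightarrow> nat) \<Rightarrow> nat list \<Rightarrow> nat" where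
  "tup pr [] = 1"
| "tup pr (a # as) = pr (a, tup pr as)"

definition untup :: "(nat \<times> nat \<Rightarrow> nat) \<Rightarrow> nat \<Rightarrow> nat list" where
  "untup pr k = (THE xs. set xs \<subseteq> Npos \<and> tup pr xs = k)"

definition semS' :: "(nat \<times> nat \<Rightarrow> nat) \<Rightarrow> nat \<Rightarrow> (nat \<Rightarrow> nat) set" where
  "semS' pr k = (case untup pr k of
       [a, m, n] \<Rightarrow> (if a = 1 then Baire - Bmn m n else if a = 2 then Bmn m n else {})
     | _ \<Rightarrow> {})"

definition semScap :: "(nat \<times> nat \<Rightarrow> nat) \<Rightarrow> nat \<Rightarrow> (nat \<Rightarrow> nat) set" where
  "semScap pr k = Baire \<inter> (\<Inter>i<length (untup pr k). semS' pr (untup pr k ! i))"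

definition semA :: "(nat \<times> nat \<Rightarrow> nat) \<Rightarrow> nat \<Rightarrow> (nat \<Rightarrow> nat) set" where
  "semA pr k = (\<Union>i<length (untup pr k). semScap pr (untup pr k ! i))"

definition sect :: "(nat \<times> nat \<Rightarrow> nat) \<Rightarrow> (nat \<Rightarrow> nat) \<Rightarrow> nat \<Rightarrow> (nat \<Rightarrow> nat)" where
  "sect pr f n = restrict (\<lambda>m. f (pr (n, m))) Npos"

inductive_set Stp :: "(nat \<times> nat \<Rightarrow> nat) \<Rightarrow> (nat \<Rightarrow> nat) set" for pr where
  leaf: "f \<in> Baire \<Longrightarrow> f 1 \<noteq> 1 \<Longrightarrow> f \<in> Stp pr"
| node: "f \<in> Baire \<Longrightarrow> f 1 = 1 \<Longrightarrow> (\<forall>n\<in>Npos. sect pr f n \<in> Stp pr) \<Longrightarrow> f \<in> Stp pr"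

text \<open>SemPS pr f g P S: P = [[g]]^Pi_f and S = [[g]]^Sigma_f (defined by recursion on the stump f).\<close>
inductive SemPS :: "(nat \<times> nat \<Rightarrow> nat) \<Rightarrow> (nat \<Rightarrow> nat) \<Rightarrow> (nat \<Rightarrow> nat)
    \<Rightarrow> (nat \<Rightarrow> nat) set \<Rightarrow> (nat \<Rightarrow> nat) set \<Rightarrow> bool" for pr where
  leaf: "f 1 \<noteq> 1 \<Longrightarrow>
     SemPS pr f g (\<Inter>n\<in>Npos - {1}. semA pr (g n)) (\<Union>n\<in>Npos - {1}. semA pr (g n))"
| node: "f 1 = 1 \<Longrightarrow> (\<forall>n\<in>Npos. SemPS pr (sect pr f n) (sect pr g n) (P n) (S n)) \<Longrightarrow>
     SemPS pr f g (\<Inter>n\<in>Npos. S n) (\<Union>n\<in>Npos. P n)"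

definition semPi :: "(nat \<times> nat \<Rightarrow> nat) \<Rightarrow> (nat \<Rightarrow> nat) \<Rightarrow> (nat \<Rightarrow> nat) \<Rightarrow> (nat \<Rightarrow> nat) set" where
  "semPi pr f g = (THE P. \<exists>S. SemPS pr f g P S)"

definition semSigma :: "(nat \<times> nat \<Rightarrow> nat) \<Rightarrow> (nat \<Rightarrow> nat) \<Rightarrow> (nat \<Rightarrow> nat) \<Rightarrow> (nat \<Rightarrow> nat) set" where
  "semSigma pr f g = (THE S. \<exists>P. SemPS pr f g P S)"

definition semB :: "(nat \<times> nat \<Rightarrow> nat) \<Rightarrow> (nat \<Rightarrow> nat) \<Rightarrow> (nat \<Rightarrow> nat) \<Rightarrow> (nat \<Rightarrow> nat) set" where
  "semB pr f g = (if g 1 = 37 then semPi pr f g else semSigma pr f g)"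

end

theory Submission
  imports Defs
begin

text \<open>
  The Borel sets are generated, as a \<sigma>-algebra on \<open>\<nat>\<^sup>\<nat>\<close>, by the basic cylinders \<open>B\<^sup>m\<^sub>n\<close>,
  so they lie in every class that contains the \<open>B\<^sup>m\<^sub>n\<close> and their complements and is closed
  under countable unions and intersections. The class of sets of the form \<open>[[g]]\<^sup>\<Sigma>\<^sub>f\<close>
  is such a class. A node stump whose sections are \<open>f\<^sub>n\<close>, paired with a code whose
  sections are \<open>g\<^sub>n\<close>, turns the \<open>\<Pi>\<close>-sets \<open>[[g\<^sub>n]]\<^sup>\<Pi>\<^sub>f\<^sub>n\<close> into their union and the \<open>\<Sigma>\<close>-sets into their
  intersection; taking all sections equal shows that \<open>\<Pi>\<close>- and \<open>\<Sigma>\<close>-sets coincide.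
  A leaf stump with a constant code realises every set \<open>[[c]]\<^sup>\<A>\<close>, in particular
  \<open>B\<^sup>m\<^sub>n\<close>, its complement, \<open>\<emptyset>\<close> and \<open>\<nat>\<^sup>\<nat>\<close>. Finally \<open>g(1)\<close> never enters the semantics,
  so it can be chosen \<open>\<noteq> 37\<close>, making \<open>[[g]]\<^sup>\<B>\<^sub>f = [[g]]\<^sup>\<Sigma>\<^sub>f\<close>.
\<close>

lemma mem_Npos_iff: "x \<in> Npos \<longleftrightarrow> 1 \<le> x"
  by (simp add: Npos_def)

section \<open>Borel sets of Baire space\<close>

fun cylinder :: "(nat \<times> nat) list \<Rightarrow> (nat \<Rightarrow> nat) set" where
  "cylinder [] = Baire"
| "cylinder ((m, n) # L) = Bmn m n \<inter> cylinder L"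

lemma mem_cylinder_iff: "f \<in> cylinder L \<longleftrightarrow> f \<in> Baire \<and> (\<forall>(m, n)\<in>set L. f n = m)"
  by (induction L rule: cylinder.induct) (auto simp: Bmn_def)

definition basic_cylinders :: "(nat \<Rightarrow> nat) set set" where
  "basic_cylinders = {Bmn m n | m n. m \<in> Npos \<and> n \<in> Npos}"

lemma sigma_algebra_basic_cylinders: "sigma_algebra Baire (sigma_sets Baire basic_cylinders)"
  by (rule sigma_algebra_sigma_sets) (auto simp: basic_cylinders_def Bmn_def)

lemma cylinder_in_sigma_basic:
  "set L \<subseteq> Npos \<times> Npos \<Longrightarrow> cylinder L \<in> sigma_sets Baire basic_cylinders"
proof (induction L rule: cylinder.induct)
  case 1
  then show ?case using sigma_sets_top by simp
next
  case (2 m n L)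
  interpret S: sigma_algebra Baire "sigma_sets Baire basic_cylinders"
    by (rule sigma_algebra_basic_cylinders)
  have "Bmn m n \<in> sigma_sets Baire basic_cylinders"
    using "2.prems" by (auto simp: basic_cylinders_def)
  with 2 show ?case by auto
qed

lemma topspace_Baire_top: "topspace Baire_top = Baire"
  by (simp add: Baire_top_def Baire_def topspace_product_topology)

lemma openin_Baire_top_cylinder:
  assumes "openin Baire_top U" "x \<in> U"
  obtains L where "set L \<subseteq> Npos \<times> Npos" "x \<in> cylinder L" "cylinder L \<subseteq> U"
proof -
  have x: "x \<in> Baire" using assms openin_subset[OF assms(1)] topspace_Baire_top by auto
  obtain V where V: "finite {i \<in> Npos. V i \<noteq> Npos}" "x \<in> Pi\<^sub>E Npos V" "Pi\<^sub>E Npos V \<subseteq> U"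
    using assms unfolding Baire_top_def openin_product_topology_alt by auto
  define F where "F = {i \<in> Npos. V i \<noteq> Npos}"
  define L where "L = map (\<lambda>i. (x i, i)) (sorted_list_of_set F)"
  have set_L: "set L = (\<lambda>i. (x i, i)) ` F"
    using V(1) by (simp add: L_def F_def)
  have "cylinder L \<subseteq> Pi\<^sub>E Npos V"
  proof
    fix h assume "h \<in> cylinder L"
    then have h: "h \<in> Baire" "\<And>i. i \<in> F \<Longrightarrow> h i = x i"
      by (auto simp: mem_cylinder_iff set_L)
    have "h i \<in> V i" if "i \<in> Npos" for i
    proof (cases "i \<in> F")
      case True
      then show ?thesis using h(2) V(2) that by auto
    next
      case False
      then show ?thesis using h(1) that by (auto simp: F_def Baire_def)
    qed
    with h(1) show "h \<in> Pi\<^sub>E Npos V"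
      by (auto simp: Baire_def PiE_def)
  qed
  moreover have "set L \<subseteq> Npos \<times> Npos" "x \<in> cylinder L"
    using x by (auto simp: set_L F_def Baire_def mem_cylinder_iff)
  ultimately show thesis
    using V(3) by (intro that) auto
qed

lemma openin_Baire_top_in_sigma_basic:
  assumes U: "openin Baire_top U"
  shows "U \<in> sigma_sets Baire basic_cylinders"
proof -
  interpret S: sigma_algebra Baire "sigma_sets Baire basic_cylinders"
    by (rule sigma_algebra_basic_cylinders)
  define X where "X = {L. set L \<subseteq> Npos \<times> Npos \<and> cylinder L \<subseteq> U}"
  have "U = (\<Union>L\<in>X. cylinder L)"
  proof
    show "U \<subseteq> (\<Union>L\<in>X. cylinder L)"
    proof
      fix x assume "x \<in> U"
      then obtain L where "set L \<subseteq> Npos \<times> Npos" "x \<in> cylinder L" "cylinder L \<subseteq> U"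
        using openin_Baire_top_cylinder[OF U] by blast
      then show "x \<in> (\<Union>L\<in>X. cylinder L)" by (auto simp: X_def)
    qed
  qed (auto simp: X_def)
  moreover have "(\<Union>L\<in>X. cylinder L) \<in> sigma_sets Baire basic_cylinders"
    using cylinder_in_sigma_basic by (intro S.countable_UN'') (auto simp: X_def)
  ultimately show ?thesis by simp
qed

lemma Borel_Baire_subset_sigma_basic: "Borel_Baire \<subseteq> sigma_sets Baire basic_cylinders"
  unfolding Borel_Baire_def topspace_Baire_top
  using openin_Baire_top_in_sigma_basic by (intro sigma_sets_mono) auto

lemma Stp_subset_Baire: "f \<in> Stp pr \<Longrightarrow> f \<in> Baire"
  by (induction rule: Stp.induct) auto

lemma SemPS_unique:
  "SemPS pr f g P S \<Longrightarrow> SemPS pr f g P' S' \<Longrightarrow> P = P' \<and> S = S'"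
proof (induction arbitrary: P' S' rule: SemPS.induct)
  case (leaf f g)
  from leaf.prems show ?case
    by (cases rule: SemPS.cases) (use leaf.hyps in auto)
next
  case (node f g P S)
  from node.prems show ?case
  proof (cases rule: SemPS.cases)
    case (node P2 S2)
    then have "\<forall>n\<in>Npos. P n = P2 n \<and> S n = S2 n" using node.IH by blast
    with node show ?thesis by (auto intro!: INF_cong SUP_cong)
  qed (use node.hyps in simp)
qed

lemma semSigma_eq: "SemPS pr f g P S \<Longrightarrow> semSigma pr f g = S"
  unfolding semSigma_def using SemPS_unique by (intro the_equality) blast+

definition Pi_rep :: "(nat \<times> nat \<Rightarrow> nat) \<Rightarrow> (nat \<Rightarrow> nat) set \<Rightarrow> bool" where
  "Pi_rep pr A \<longleftrightarrow> (\<exists>f\<in>Stp pr. \<exists>g\<in>Baire. g 1 = 1 \<and> (\<exists>S. SemPS pr f g A S))"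

definition Sigma_rep :: "(nat \<times> nat \<Rightarrow> nat) \<Rightarrow> (nat \<Rightarrow> nat) set \<Rightarrow> bool" where
  "Sigma_rep pr A \<longleftrightarrow> (\<exists>f\<in>Stp pr. \<exists>g\<in>Baire. g 1 = 1 \<and> (\<exists>P. SemPS pr f g P A))"

lemma Sigma_rep_semA:
  assumes "c \<in> Npos"
  shows "Sigma_rep pr (semA pr c)"
proof -
  define f :: "nat \<Rightarrow> nat" where "f = (\<lambda>x. if x \<in> Npos then 2 else undefined)"
  define g :: "nat \<Rightarrow> nat" where
    "g = (\<lambda>x. if x \<in> Npos then (if x = 1 then 1 else c) else undefined)"
  have "f \<in> Stp pr"
    by (rule Stp.leaf) (auto simp: f_def Baire_def mem_Npos_iff)
  moreover have "g \<in> Baire" "g 1 = 1"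
    using assms by (auto simp: g_def Baire_def mem_Npos_iff)
  moreover have "SemPS pr f g (\<Inter>n\<in>Npos - {1}. semA pr (g n)) (\<Union>n\<in>Npos - {1}. semA pr (g n))"
    by (rule SemPS.leaf) (simp add: f_def mem_Npos_iff)
  moreover have "(\<Union>n\<in>Npos - {1}. semA pr (g n)) = semA pr c"
  proof -
    have "g n = c" if "n \<in> Npos - {1}" for n using that by (simp add: g_def)
    moreover have "(2::nat) \<in> Npos - {1}" by (simp add: mem_Npos_iff)
    ultimately show ?thesis by auto
  qed
  ultimately show ?thesis unfolding Sigma_rep_def by metis
qed

context
  fixes pr :: "nat \<times> nat \<Rightarrow> nat"
  assumes bij: "bij_betw pr (Npos \<times> Npos) (Npos - {1})"
begin

lemma pair_in_Npos: "a \<in> Npos \<Longrightarrow> b \<in> Npos \<Longrightarrow> pr (a, b) \<in> Npos - {1}"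
  using bij by (auto dest: bij_betw_apply)

lemma tup_in_Npos: "set xs \<subseteq> Npos \<Longrightarrow> tup pr xs \<in> Npos"
  by (induction xs) (use pair_in_Npos in \<open>auto simp: mem_Npos_iff\<close>)

lemma tup_inject:
  "set xs \<subseteq> Npos \<Longrightarrow> set ys \<subseteq> Npos \<Longrightarrow> tup pr xs = tup pr ys \<Longrightarrow> xs = ys"
proof (induction xs arbitrary: ys)
  case Nil
  then show ?case using pair_in_Npos tup_in_Npos by (cases ys) fastforce+
next
  case (Cons a as)
  show ?case
  proof (cases ys)
    case Nil
    then show ?thesis using Cons pair_in_Npos tup_in_Npos by fastforce
  next
    case (Cons b bs)
    have "(a, tup pr as) = (b, tup pr bs)"
      using bij Cons.prems Cons tup_in_Npos unfolding bij_betw_def inj_on_def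
      by (metis SigmaI insert_subset list.simps(15) tup.simps(2))
    then show ?thesis using Cons.IH Cons.prems Cons by auto
  qed
qed

lemma untup_tup: "set xs \<subseteq> Npos \<Longrightarrow> untup pr (tup pr xs) = xs"
  unfolding untup_def by (rule the_equality) (auto intro: tup_inject)

lemma semA_1: "semA pr 1 = {}"
  using untup_tup[of "[]"] by (simp add: semA_def)

lemma semA_tup_Baire: "semA pr (tup pr [1]) = Baire"
  using untup_tup[of "[1]"] untup_tup[of "[]"]
  by (simp add: semA_def semScap_def mem_Npos_iff lessThan_Suc)

lemma semA_tup_Bmn:
  assumes "a \<in> {1, 2}" "m \<in> Npos" "n \<in> Npos"
  shows "semA pr (tup pr [tup pr [tup pr [a, m, n]]]) = (if a = 1 then Baire - Bmn m n else Bmn m n)"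
proof -
  have "set [a, m, n] \<subseteq> Npos" using assms by (auto simp: mem_Npos_iff)
  then have "tup pr [a, m, n] \<in> Npos" "untup pr (tup pr [a, m, n]) = [a, m, n]"
    by (rule tup_in_Npos, rule untup_tup)
  then have "tup pr [tup pr [a, m, n]] \<in> Npos"
    "untup pr (tup pr [tup pr [a, m, n]]) = [tup pr [a, m, n]]"
    using tup_in_Npos[of "[tup pr [a, m, n]]"] untup_tup[of "[tup pr [a, m, n]]"] by simp_all
  then have "untup pr (tup pr [tup pr [tup pr [a, m, n]]]) = [tup pr [tup pr [a, m, n]]]"
    using untup_tup[of "[tup pr [tup pr [a, m, n]]]"] by simp
  moreover have "Bmn m n \<subseteq> Baire" by (auto simp: Bmn_def)
  ultimately show ?thesis
    using assms(1) \<open>untup pr (tup pr [a, m, n]) = [a, m, n]\<close>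
      \<open>untup pr (tup pr [tup pr [a, m, n]]) = [tup pr [a, m, n]]\<close>
    by (auto simp: semA_def semScap_def semS'_def lessThan_Suc)
qed

section \<open>Gluing stumps along the pairing\<close>

definition glue :: "(nat \<Rightarrow> nat \<Rightarrow> nat) \<Rightarrow> nat \<Rightarrow> nat" where
  "glue F x = (if x = 1 then 1 else if x \<in> Npos then
      (case inv_into (Npos \<times> Npos) pr x of (a, b) \<Rightarrow> F a b) else undefined)"

lemma glue_1: "glue F 1 = 1"
  by (simp add: glue_def)

lemma sect_glue:
  assumes "n \<in> Npos" "F n \<in> Baire"
  shows "sect pr (glue F) n = F n"
proof
  fix m
  show "sect pr (glue F) n m = F n m"
  proof (cases "m \<in> Npos")
    case True
    then have "inv_into (Npos \<times> Npos) pr (pr (n, m)) = (n, m)"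
      using bij assms by (simp add: bij_betw_def inv_into_f_f)
    with True show ?thesis
      using pair_in_Npos assms by (simp add: sect_def glue_def)
  next
    case False
    then show ?thesis using assms(2) by (simp add: sect_def Baire_def PiE_def extensional_def)
  qed
qed

lemma glue_in_Baire:
  assumes "\<And>n. n \<in> Npos \<Longrightarrow> F n \<in> Baire"
  shows "glue F \<in> Baire"
proof -
  have "glue F x \<in> Npos" if x: "x \<in> Npos" "x \<noteq> 1" for x
  proof -
    have "x \<in> pr ` (Npos \<times> Npos)" using bij x by (simp add: bij_betw_def)
    then have "inv_into (Npos \<times> Npos) pr x \<in> Npos \<times> Npos" by (rule inv_into_into)
    then obtain a b where "inv_into (Npos \<times> Npos) pr x = (a, b)" "a \<in> Npos" "b \<in> Npos"
      by auto
    with x assms[of a] show ?thesis by (auto simp: glue_def Baire_def)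
  qed
  then show ?thesis
    by (auto simp: Baire_def PiE_def extensional_def glue_def mem_Npos_iff)
qed

lemma SemPS_glue:
  fixes F G :: "nat \<Rightarrow> nat \<Rightarrow> nat" and P S :: "nat \<Rightarrow> (nat \<Rightarrow> nat) set"
  assumes "\<And>k. F k \<in> Stp pr" "\<And>k. G k \<in> Baire" "\<And>k. SemPS pr (F k) (G k) (P k) (S k)"
  shows "\<exists>f\<in>Stp pr. \<exists>g\<in>Baire. g 1 = 1 \<and> SemPS pr f g (\<Inter>k. S k) (\<Union>k. P k)"
proof -
  define f where "f = glue (\<lambda>n. F (n - 1))"
  define g where "g = glue (\<lambda>n. G (n - 1))"
  have sect_f: "sect pr f n = F (n - 1)" if "n \<in> Npos" for n
    unfolding f_def using that assms(1) Stp_subset_Baire by (intro sect_glue) auto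
  have sect_g: "sect pr g n = G (n - 1)" if "n \<in> Npos" for n
    unfolding g_def using that assms(2) by (intro sect_glue) auto
  have f_1: "f 1 = 1" and g_1: "g 1 = 1"
    unfolding f_def g_def by (rule glue_1)+
  have "g \<in> Baire"
    unfolding g_def using assms(2) by (intro glue_in_Baire)
  moreover have "f \<in> Stp pr"
  proof (rule Stp.node)
    show "f \<in> Baire"
      unfolding f_def using assms(1) Stp_subset_Baire by (intro glue_in_Baire) blast
    show "\<forall>n\<in>Npos. sect pr f n \<in> Stp pr"
      using sect_f assms(1) by simp
  qed (fact f_1)
  moreover have "SemPS pr f g (\<Inter>n\<in>Npos. S (n - 1)) (\<Union>n\<in>Npos. P (n - 1))"
    using f_1 assms(3) sect_f sect_g by (intro SemPS.node) simp_all
  moreover have "(\<lambda>n. n - 1) ` Npos = UNIV"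
  proof (intro set_eqI iffI)
    show "k \<in> (\<lambda>n. n - 1) ` Npos" for k
      by (rule image_eqI[of _ _ "Suc k"]) (simp_all add: mem_Npos_iff)
  qed auto
  then have "(\<Inter>n\<in>Npos. S (n - 1)) = (\<Inter>k. S k)" "(\<Union>n\<in>Npos. P (n - 1)) = (\<Union>k. P k)"
    by (metis image_image)+
  ultimately show ?thesis
    using g_1 by auto
qed

section \<open>Borel sets are \<open>\<Sigma>\<close>-representable\<close>

lemma Sigma_rep_UN:
  assumes "\<And>k::nat. Pi_rep pr (A k)"
  shows "Sigma_rep pr (\<Union>k. A k)"
proof -
  obtain F G S where "\<And>k. F k \<in> Stp pr" "\<And>k. G k \<in> Baire" "\<And>k. SemPS pr (F k) (G k) (A k) (S k)"
    using assms unfolding Pi_rep_def by metis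
  then have "\<exists>f\<in>Stp pr. \<exists>g\<in>Baire. g 1 = 1 \<and> SemPS pr f g (\<Inter>k. S k) (\<Union>k. A k)"
    by (rule SemPS_glue)
  then show ?thesis unfolding Sigma_rep_def by blast
qed

lemma Pi_rep_INT:
  assumes "\<And>k::nat. Sigma_rep pr (A k)"
  shows "Pi_rep pr (\<Inter>k. A k)"
proof -
  obtain F G P where "\<And>k. F k \<in> Stp pr" "\<And>k. G k \<in> Baire" "\<And>k. SemPS pr (F k) (G k) (P k) (A k)"
    using assms unfolding Sigma_rep_def by metis
  then have "\<exists>f\<in>Stp pr. \<exists>g\<in>Baire. g 1 = 1 \<and> SemPS pr f g (\<Inter>k. A k) (\<Union>k. P k)"
    by (rule SemPS_glue)
  then show ?thesis unfolding Pi_rep_def by blast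
qed

lemma Pi_rep_iff_Sigma_rep: "Pi_rep pr A \<longleftrightarrow> Sigma_rep pr A"
  using Sigma_rep_UN[of "\<lambda>_. A"] Pi_rep_INT[of "\<lambda>_. A"] by auto

lemma Sigma_rep_Bmn:
  assumes "m \<in> Npos" "n \<in> Npos"
  shows "Sigma_rep pr (Bmn m n)" "Sigma_rep pr (Baire - Bmn m n)"
proof -
  have code: "tup pr [tup pr [tup pr [a, m, n]]] \<in> Npos" if "a \<in> {1, 2}" for a
  proof -
    have "tup pr [a, m, n] \<in> Npos"
      using assms that by (intro tup_in_Npos) (auto simp: mem_Npos_iff)
    then have "tup pr [tup pr [a, m, n]] \<in> Npos" by (intro tup_in_Npos) simp
    then show ?thesis by (intro tup_in_Npos) simp
  qed
  show "Sigma_rep pr (Bmn m n)"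
    using Sigma_rep_semA[OF code[of 2], of pr] semA_tup_Bmn[of 2, OF _ assms] by simp
  show "Sigma_rep pr (Baire - Bmn m n)"
    using Sigma_rep_semA[OF code[of 1], of pr] semA_tup_Bmn[of 1, OF _ assms] by simp
qed

lemma Sigma_rep_sigma_basic:
  "A \<in> sigma_sets Baire basic_cylinders \<Longrightarrow>
    A \<subseteq> Baire \<and> Sigma_rep pr A \<and> Sigma_rep pr (Baire - A)"
proof (induction rule: sigma_sets.induct)
  case (Basic A)
  then show ?case
    using Sigma_rep_Bmn by (auto simp: basic_cylinders_def Bmn_def)
next
  case Empty
  show ?case
    using Sigma_rep_semA[of 1 pr] Sigma_rep_semA[of "tup pr [1]" pr] semA_1 semA_tup_Baire
      tup_in_Npos[of "[1]"]
    by (simp add: mem_Npos_iff)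
next
  case (Compl A)
  then show ?case by (simp add: Diff_Diff_Int Int_absorb1)
next
  case (Union A)
  have "Baire - (\<Union>k. A k) = (\<Inter>k. Baire - A k)" by auto
  with Union show ?case
    using Sigma_rep_UN[of A] Pi_rep_INT[of "\<lambda>k. Baire - A k"] Pi_rep_iff_Sigma_rep by auto
qed

end

theorem proposition5p19:
  fixes pr :: "nat \<times> nat \<Rightarrow> nat" and A :: "(nat \<Rightarrow> nat) set"
  assumes "bij_betw pr (Npos \<times> Npos) (Npos - {1})"
    and "A \<in> Borel_Baire"
  shows "\<exists>g\<in>Baire. \<exists>f\<in>Stp pr. A = semB pr f g"
proof -
  have "Sigma_rep pr A"
    using Sigma_rep_sigma_basic[OF assms(1)] Borel_Baire_subset_sigma_basic assms(2) by blast
  then obtain f g P where "f \<in> Stp pr" "g \<in> Baire" "g 1 = 1" "SemPS pr f g P A"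
    unfolding Sigma_rep_def by blast
  from \<open>SemPS pr f g P A\<close> have "semSigma pr f g = A" by (rule semSigma_eq)
  with \<open>g 1 = 1\<close> have "A = semB pr f g" by (simp add: semB_def)
  with \<open>f \<in> Stp pr\<close> \<open>g \<in> Baire\<close> show ?thesis by blast
qed

end
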